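(* Let $(X,d)$ be a complete metric space and let $G:X\times X\to X$ be a mapping such that (i) $G(x,x)=x$ for all $x\in X$, and (ii) for $x,y\in X$, $G(x,y)=x$ implies $y=x$. Let $T:X\to P_{cl}(X)$ be a multivalued operator with $SFix(T)\neq\emptyset$, let $x^*\in SFix(T)$, and let $T_G(x)=\{G(x,u):u\in T(x)\}$ be the admissible perturbation of $T$ corresponding to $G$. Suppose there exists $k\in(0,1)$ such that $$H(T_G(x),\{x^*\})\le k\,d(x,x^* )\quad\text{for all }x\in X.$$ Then $$H(T_G(Y),\{x^*\})\le k\,H(Y,\{x^*\})\quad\text{for all }Y\in P_{cl}(X).$$
   Context: $P(X)$ denotes the family of nonempty subsets of $X$ and $P_{cl}(X)$ the family of nonempty closed subsets. $SFix(T)=\{x\in X:T(x)=\{x\}\}$. For $A,B\in P(X)$: $D(a,B)=\inf\{d(a,b):b\in B\}$, $e(A,B)=\sup\{D(a,B):a\in A\}$, $H(A,B)=\max\{e(A,B),e(B,A)\}$ (possibly $+\infty$). For $Y\subseteq X$, $T_G(Y)=\bigcup_{y\in Y}T_G(y)$. *)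

theory Defs
  imports "HOL-Analysis.Analysis"
begin

definition gapD :: "'a::metric_space \<Rightarrow> 'a set \<Rightarrow> ereal" where
  "gapD a B = (INF b\<in>B. ereal (dist a b))"

definition excess :: "'a::metric_space set \<Rightarrow> 'a set \<Rightarrow> ereal" where
  "excess A B = (SUP a\<in>A. gapD a B)"

definition hausdorffH :: "'a::metric_space set \<Rightarrow> 'a set \<Rightarrow> ereal" where
  "hausdorffH A B = max (excess A B) (excess B A)"

definition SFix :: "('a \<Rightarrow> 'a set) \<Rightarrow> 'a set" where
  "SFix T = {x. T x = {x}}"

definition perturb :: "('a \<Rightarrow> 'a \<Rightarrow> 'a) \<Rightarrow> ('a \<Rightarrow> 'a set) \<Rightarrow> 'a \<Rightarrow> 'a set" where
  "perturb G T x = {G x u | u. u \<in> T x}"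

definition perturb_set :: "('a \<Rightarrow> 'a \<Rightarrow> 'a) \<Rightarrow> ('a \<Rightarrow> 'a set) \<Rightarrow> 'a set \<Rightarrow> 'a set" where
  "perturb_set G T Y = (\<Union>y\<in>Y. perturb G T y)"

end

theory Submission
  imports Defs
begin

text \<open>Against a singleton, the Pompeiu-Hausdorff distance is just the supremum of the
  distances to the point, so a bound \<open>k d(y, x\<^sup>*)\<close> on each \<open>T\<^sub>G(y)\<close> bounds every point
  of \<open>T\<^sub>G(Y)\<close> by \<open>k H(Y, {x\<^sup>*})\<close>.\<close>

lemma hausdorffH_singleton:
  assumes "A \<noteq> {}"
  shows "hausdorffH A {x} = (SUP a\<in>A. ereal (dist a x))"
proof -
  have excess_to: "excess A {x} = (SUP a\<in>A. ereal (dist a x))"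
    by (simp add: excess_def gapD_def)
  have "excess {x} A = (INF a\<in>A. ereal (dist a x))"
    by (simp add: excess_def gapD_def dist_commute)
  also have "\<dots> \<le> (SUP a\<in>A. ereal (dist a x))"
    using assms by (rule INF_le_SUP)
  finally show ?thesis
    unfolding hausdorffH_def excess_to by (simp add: max_def)
qed

lemma hausdorffH_empty_singleton: "hausdorffH {} {x} = \<infinity>"
  by (simp add: hausdorffH_def excess_def gapD_def top_ereal_def)

lemma hausdorffH_UN_singleton_le:
  assumes "Y \<noteq> {}" and "0 \<le> k"
    and bound: "\<And>y. y \<in> Y \<Longrightarrow> hausdorffH (F y) {x} \<le> ereal k * ereal (dist y x)"
  shows "hausdorffH (\<Union>y\<in>Y. F y) {x} \<le> ereal k * hausdorffH Y {x}"
proof -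
  have F_ne: "F y \<noteq> {}" if "y \<in> Y" for y
    using bound[OF that] by (auto simp: hausdorffH_empty_singleton)
  have "hausdorffH (\<Union>y\<in>Y. F y) {x} = (SUP z\<in>(\<Union>y\<in>Y. F y). ereal (dist z x))"
    using assms(1) F_ne by (intro hausdorffH_singleton) auto
  also have "\<dots> \<le> ereal k * (SUP y\<in>Y. ereal (dist y x))"
  proof (rule SUP_least)
    fix z assume "z \<in> (\<Union>y\<in>Y. F y)"
    then obtain y where y: "y \<in> Y" "z \<in> F y" by blast
    have "ereal (dist z x) \<le> (SUP z\<in>F y. ereal (dist z x))"
      using y(2) by (rule SUP_upper)
    also have "\<dots> = hausdorffH (F y) {x}"
      using hausdorffH_singleton[OF F_ne[OF y(1)]] by simp
    also have "\<dots> \<le> ereal k * ereal (dist y x)"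
      using y(1) by (rule bound)
    also have "\<dots> \<le> ereal k * (SUP y\<in>Y. ereal (dist y x))"
      using y(1) \<open>0 \<le> k\<close> by (intro ereal_mult_left_mono SUP_upper) auto
    finally show "ereal (dist z x) \<le> ereal k * (SUP y\<in>Y. ereal (dist y x))" .
  qed
  also have "\<dots> = ereal k * hausdorffH Y {x}"
    using hausdorffH_singleton[OF assms(1)] by simp
  finally show ?thesis .
qed

theorem mainTheorem2:
  fixes G :: "'a::complete_space \<Rightarrow> 'a \<Rightarrow> 'a"
    and T :: "'a \<Rightarrow> 'a set"
    and xs :: 'a
    and k :: real
  assumes G_diag: "\<And>x. G x x = x"
    and G_inj: "\<And>x y. G x y = x \<Longrightarrow> y = x"
    and T_ne: "\<And>x. T x \<noteq> {}"
    and T_closed: "\<And>x. closed (T x)"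
    and SFix_ne: "SFix T \<noteq> {}"
    and xs_fix: "xs \<in> SFix T"
    and k_pos: "0 < k" and k_lt1: "k < 1"
    and contr: "\<And>x. hausdorffH (perturb G T x) {xs} \<le> ereal k * ereal (dist x xs)"
  shows "\<forall>Y. Y \<noteq> {} \<and> closed Y \<longrightarrow>
           hausdorffH (perturb_set G T Y) {xs} \<le> ereal k * hausdorffH Y {xs}"
  unfolding perturb_set_def
  using k_pos contr by (auto intro: hausdorffH_UN_singleton_le)

end
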